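(* Let $n \geqslant 1$, let $\lambda$ be an integer partition with $\lambda_1+\ell(\lambda)-1=n$, and let $c \in \mathfrak{S}_{n+1}$ be a Coxeter element. Fix $k \in \{1,\ldots,n\}$ such that $s_k$ is final in $\mathsf{c}(\lambda)$, and $s_k$ is either initial or final in $c$. Then for every $a\in\mathbb{N}$ and every filling $f$ of $\lambda$, \[\mathcal{RSK}_{\lambda,c}(\mathrm{add}^a_{\lambda,k}(f)) = \mathrm{add}^a_{\lambda,k}(\mathcal{RSK}_{\lambda,c}(f)).\]
   Context: $s_i=(i,i+1)\in\mathfrak{S}_{n+1}$; $\ell(w)$ is the Coxeter length w.r.t. $\{s_1,\dots,s_n\}$. A Coxeter element is a product of $s_1,\dots,s_n$ each exactly once. $s$ is initial in $w$ if $\ell(sw)<\ell(w)$ and final in $w$ if $\ell(ws)<\ell(w)$. Ferrers diagram $\mathrm{Fer}(\lambda)=\{(i,j):j\le\lambda_i\}$. Row/column labels: label the unit segments of the south-east boundary of $\mathrm{Fer}(\lambda)$ by $1,\dots,n+1$ from top-right to bottom-left; rows and columns inherit labels; $\mathbf L$ = row labels, $\mathbf R$ = column labels; $[\ell,r]$ is the box with row label $\ell$ and column label $r$ (exists iff $\ell<r$). Every Coxeter element is a long cycle $(c_1=1<c_2<\dots<c_m=n+1>c_{m+1}>\dots>c_{n+1})$; $\mathsf{c}(\lambda)$ is the unique Coxeter element for which $\{c_2,\dots,c_{m-1}\}=\mathbf L\setminus\{1\}$ and $\{c_{m+1},\dots,c_{n+1}\}=\mathbf R\setminus\{n+1\}$.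 For $a\in\mathbb{N}$ and a filling $g$ of $\lambda$, $\mathrm{add}^a_{\lambda,k}(g)$ is the filling obtained from $g$ by adding $a$ to the value of the box $[k,k+1]$ only (under the hypothesis, $k\in\mathbf L$ and $k+1\in\mathbf R$). Diagonals $D_k(\lambda)=\{(i,j):\lambda_1+i-j=k\}$, $\delta_k=\max\{\min(i,j):(i,j)\in D_k(\lambda)\}$, $(i,j)\in D_k(\lambda)$ has coordinates $\langle k,\delta\rangle_\lambda$ with $\delta=\delta_k-\min(i,j)+1$. Greene–Kleitman: for acyclic $G$ and $g:G_0\to\mathbb{N}$, $M_t$ = max over $t$-tuples of (possibly one-vertex) directed paths of the sum of $g$ over the union of their vertices, $M_0=0$, $\mathrm{GK}_G(g)=(M_t-M_{t-1})_{t\ge1}$. $\mathrm{AR}(c)$ has vertices the transpositions $(i,j)$, $1\le i<j\le n+1$, arrows $(i,j)\to(i,c(j))$ if $i<c(j)$ and $(i,j)\to(c(i),j)$ if $c(i)<j$; $\mathrm{AR}^{[k]}(c)$ is the full subgraph on $(\ell,r)$, $\ell\le k<r$. $\mathrm{rep}_{\lambda,c}(f)(\ell,r)=f([\ell,r])$ if $\ell\in\mathbf L,r\in\mathbf R,\ell<r$, else $0$; $\mathcal{RSK}_{\lambda,c}(f)(\langle k,\delta\rangle_\lambda)$ is the $\delta$-th part of $\mathrm{GK}_{\mathrm{AR}^{[k]}(c)}$ of the restriction of $\mathrm{rep}_{\lambda,c}(f)$. *)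

theory Defs
  imports Main "HOL-Combinatorics.Transposition"
begin

text \<open>Permutations of {1..n+1} are functions nat => nat (fixing everything else).
  Products are compositions of functions: (u w)(x) = u (w x).\<close>

definition sgen :: "nat \<Rightarrow> nat \<Rightarrow> nat" where
  "sgen i = transpose i (Suc i)"

definition word_prod :: "nat list \<Rightarrow> nat \<Rightarrow> nat" where
  "word_prod ws = foldr (\<lambda>i w. sgen i \<circ> w) ws id"

definition coxeter_elem :: "nat \<Rightarrow> (nat \<Rightarrow> nat) \<Rightarrow> bool" where
  "coxeter_elem n w \<longleftrightarrow>
     (\<exists>ws. distinct ws \<and> set ws = {1..n} \<and> w = word_prod ws)"

definition cox_len :: "nat \<Rightarrow> (nat \<Rightarrow> nat) \<Rightarrow> nat" where
  "cox_len n w = (LEAST m. \<exists>ws. length ws = m \<and> set ws \<subseteq> {1..n} \<and> w = word_prod ws)"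

definition is_initial :: "nat \<Rightarrow> nat \<Rightarrow> (nat \<Rightarrow> nat) \<Rightarrow> bool" where
  "is_initial n k w \<longleftrightarrow> cox_len n (sgen k \<circ> w) < cox_len n w"

definition is_final :: "nat \<Rightarrow> nat \<Rightarrow> (nat \<Rightarrow> nat) \<Rightarrow> bool" where
  "is_final n k w \<longleftrightarrow> cox_len n (w \<circ> sgen k) < cox_len n w"

text \<open>A partition is a nonempty weakly decreasing list of positive parts;
  \<lambda>_i = lam ! (i - 1) (1-based), \<ell>(\<lambda>) = length lam.\<close>
definition is_partition :: "nat list \<Rightarrow> bool" where
  "is_partition lam \<longleftrightarrow> lam \<noteq> [] \<and> sorted_wrt (\<ge>) lam \<and> (\<forall>x\<in>set lam. 0 < x)"

definition part :: "nat list \<Rightarrow> nat \<Rightarrow> nat" where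
  "part lam i = lam ! (i - 1)"

definition Fer :: "nat list \<Rightarrow> (nat \<times> nat) set" where
  "Fer lam = {(i, j). 1 \<le> i \<and> i \<le> length lam \<and> 1 \<le> j \<and> j \<le> part lam i}"

definition col_len :: "nat list \<Rightarrow> nat \<Rightarrow> nat" where
  "col_len lam j = card {i. 1 \<le> i \<and> i \<le> length lam \<and> j \<le> part lam i}"

text \<open>Labels of the south-east boundary segments, numbered 1..n+1 from top-right
  to bottom-left.  The east segment of row i is preceded by the i-1 east segments of
  rows above it and by the \<lambda>_1 - \<lambda>_i south segments of the columns to the right of
  \<lambda>_i; the south segment of column j is preceded by the south segments of columns
  j+1..\<lambda>_1 and by the east segments of rows 1..\<lambda>'_j.\<close>
definition row_label :: "nat list \<Rightarrow> nat \<Rightarrow> nat" where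
  "row_label lam i = i + part lam 1 - part lam i"

definition col_label :: "nat list \<Rightarrow> nat \<Rightarrow> nat" where
  "col_label lam j = part lam 1 - j + col_len lam j + 1"

definition Lset :: "nat list \<Rightarrow> nat set" where
  "Lset lam = row_label lam ` {1..length lam}"

definition Rset :: "nat list \<Rightarrow> nat set" where
  "Rset lam = col_label lam ` {1..part lam 1}"

definition row_of :: "nat list \<Rightarrow> nat \<Rightarrow> nat" where
  "row_of lam l = (THE i. i \<in> {1..length lam} \<and> row_label lam i = l)"

definition col_of :: "nat list \<Rightarrow> nat \<Rightarrow> nat" where
  "col_of lam r = (THE j. j \<in> {1..part lam 1} \<and> col_label lam j = r)"

definition cyc_seq :: "nat \<Rightarrow> nat list \<Rightarrow> nat list" where
  "cyc_seq n lam = [1] @ sorted_list_of_set (Lset lam - {1}) @ [n + 1]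
                   @ rev (sorted_list_of_set (Rset lam - {n + 1}))"

definition c_lam :: "nat \<Rightarrow> nat list \<Rightarrow> nat \<Rightarrow> nat" where
  "c_lam n lam = (THE w. coxeter_elem n w \<and>
      (\<forall>i < n + 1. w (cyc_seq n lam ! i) = cyc_seq n lam ! (Suc i mod (n + 1))))"

text \<open>A directed graph is given by a vertex set V and an arrow relation E
  (only arrows between vertices of V are used: full subgraph on V).\<close>
definition is_dpath :: "'v set \<Rightarrow> ('v \<Rightarrow> 'v \<Rightarrow> bool) \<Rightarrow> 'v list \<Rightarrow> bool" where
  "is_dpath V E p \<longleftrightarrow> p \<noteq> [] \<and> set p \<subseteq> V \<and>
      (\<forall>i. Suc i < length p \<longrightarrow> E (p ! i) (p ! Suc i))"

definition GK_M :: "'v set \<Rightarrow> ('v \<Rightarrow> 'v \<Rightarrow> bool) \<Rightarrow> ('v \<Rightarrow> nat) \<Rightarrow> nat \<Rightarrow> nat" where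
  "GK_M V E g t = Max {sum g (\<Union>p\<in>set ps. set p) | ps.
       length ps = t \<and> (\<forall>p\<in>set ps. is_dpath V E p)}"

definition GK_part :: "'v set \<Rightarrow> ('v \<Rightarrow> 'v \<Rightarrow> bool) \<Rightarrow> ('v \<Rightarrow> nat) \<Rightarrow> nat \<Rightarrow> nat" where
  "GK_part V E g t = GK_M V E g t - GK_M V E g (t - 1)"

definition AR_arrow :: "(nat \<Rightarrow> nat) \<Rightarrow> nat \<times> nat \<Rightarrow> nat \<times> nat \<Rightarrow> bool" where
  "AR_arrow c v w \<longleftrightarrow>
     (let (i, j) = v in (i < c j \<and> w = (i, c j)) \<or> (c i < j \<and> w = (c i, j)))"

definition AR_sub_vertices :: "nat \<Rightarrow> nat \<Rightarrow> (nat \<times> nat) set" where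
  "AR_sub_vertices n k = {(l, r). 1 \<le> l \<and> l < r \<and> r \<le> n + 1 \<and> l \<le> k \<and> k < r}"

text \<open>A filling of \<lambda> is a map Fer(\<lambda>) -> nat, represented as a function on nat \<times> nat
  (values outside Fer(\<lambda>) are irrelevant).\<close>

definition rep :: "nat list \<Rightarrow> (nat \<times> nat \<Rightarrow> nat) \<Rightarrow> nat \<times> nat \<Rightarrow> nat" where
  "rep lam f v = (let (l, r) = v in
      if l \<in> Lset lam \<and> r \<in> Rset lam \<and> l < r then f (row_of lam l, col_of lam r) else 0)"

definition diag :: "nat list \<Rightarrow> nat \<Rightarrow> (nat \<times> nat) set" where
  "diag lam k = {(i, j) \<in> Fer lam. part lam 1 + i - j = k}"

definition delta_max :: "nat list \<Rightarrow> nat \<Rightarrow> nat" where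
  "delta_max lam k = Max ((\<lambda>(i, j). min i j) ` diag lam k)"

definition RSK :: "nat \<Rightarrow> nat list \<Rightarrow> (nat \<Rightarrow> nat) \<Rightarrow> (nat \<times> nat \<Rightarrow> nat) \<Rightarrow> nat \<times> nat \<Rightarrow> nat" where
  "RSK n lam c f b = (let (i, j) = b; k = part lam 1 + i - j;
       \<delta> = delta_max lam k - min i j + 1 in
     if b \<in> Fer lam then GK_part (AR_sub_vertices n k) (AR_arrow c) (rep lam f) \<delta> else 0)"

definition add_box :: "nat list \<Rightarrow> nat \<Rightarrow> nat \<Rightarrow> (nat \<times> nat \<Rightarrow> nat) \<Rightarrow> nat \<times> nat \<Rightarrow> nat" where
  "add_box lam k a g b = (let (i, j) = b in
      if b \<in> Fer lam \<and> row_label lam i = k \<and> col_label lam j = Suc k then g b + a else g b)"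

end

theory Submission
  imports Defs "HOL-Combinatorics.Cycles"
begin

text \<open>
  If no box carries the labels [k, k+1], then add^a is the identity. Otherwise that box is an
  outer corner of \<lambda>: it lies on the diagonal D_k, where it is the box with \<delta> = 1, and adding a
  to it adds a to the representation at the single vertex (k, k+1), which belongs to
  AR^[k](c) and to no other AR^[k'](c). Since s_k is initial or final in c, every vertex of
  AR^[k](c) reaches (k, k+1) or is reached from it, so every family of paths can be
  enlarged to one through (k, k+1): each M_t with t \<ge> 1 grows by exactly a, and only the first
  Greene-Kleitman part changes.

  Finality is read off from crossing numbers: a word for w has at least
  \<Sum>_j #{l \<le> j. j < w l} letters, and a Coxeter element crosses each level exactly once. So if s_k
  is final in c, then c sends k above the cut between k and k+1, sends k+1 below it, and keeps
  all other points on their side; as c is a long cycle, following orbits leads every vertex to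
  (k, k+1). The initial case is the final case for the inverse of c, whose AR^[k] is that of c
  with all arrows reversed.
\<close>

lemma word_prod_Nil [simp]: "word_prod [] = id"
  by (simp add: word_prod_def)

lemma word_prod_Cons [simp]: "word_prod (i # ws) = sgen i \<circ> word_prod ws"
  by (simp add: word_prod_def)

lemma word_prod_append: "word_prod (xs @ ys) = word_prod xs \<circ> word_prod ys"
  by (induction xs) (simp_all add: comp_assoc)

lemma sgen_involutory [simp]: "sgen i \<circ> sgen i = id"
  by (simp add: sgen_def)

lemma bij_sgen [simp]: "bij (sgen i)"
  by (simp add: sgen_def)

lemma bij_word_prod: "bij (word_prod ws)"
  by (induction ws) (simp_all only: word_prod_Nil word_prod_Cons bij_id bij_sgen bij_comp)

lemma word_prod_rev_comp: "word_prod (rev ws) \<circ> word_prod ws = id"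
proof (induction ws)
  case (Cons i ws)
  have "word_prod (rev (i # ws)) \<circ> word_prod (i # ws)
        = word_prod (rev ws) \<circ> (sgen i \<circ> sgen i) \<circ> word_prod ws"
    by (simp only: rev.simps word_prod_append word_prod_Cons word_prod_Nil comp_id comp_assoc)
  then show ?case using Cons.IH by (simp only: sgen_involutory comp_id)
qed simp

lemma inv_word_prod: "inv (word_prod ws) = word_prod (rev ws)"
  using word_prod_rev_comp[of ws] word_prod_rev_comp[of "rev ws"]
  by (intro inv_unique_comp) simp_all

lemma sgen_comm: "Suc j < i \<Longrightarrow> sgen i \<circ> sgen j = sgen j \<circ> sgen i"
  by (rule ext) (simp add: sgen_def transpose_def)

lemma sgen_word_prod_comm:
  "\<forall>j\<in>set ws. Suc j < i \<Longrightarrow> sgen i \<circ> word_prod ws = word_prod ws \<circ> sgen i"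
proof (induction ws)
  case (Cons j ws)
  have ij: "sgen i \<circ> sgen j = sgen j \<circ> sgen i" using Cons.prems by (intro sgen_comm) simp
  have IH: "sgen i \<circ> word_prod ws = word_prod ws \<circ> sgen i" using Cons.prems by (intro Cons.IH) simp
  have "sgen i \<circ> word_prod (j # ws) = (sgen i \<circ> sgen j) \<circ> word_prod ws"
    by (simp only: word_prod_Cons comp_assoc)
  also have "\<dots> = sgen j \<circ> (sgen i \<circ> word_prod ws)" by (simp only: ij comp_assoc)
  also have "\<dots> = word_prod (j # ws) \<circ> sgen i" by (simp only: IH word_prod_Cons comp_assoc)
  finally show ?case .
qed simp

section \<open>Coxeter elements are long cycles\<close>

lemma cycle_of_list_rotate_to_front:
  assumes "distinct cs" "x \<in> set cs"
  obtains ys where "distinct (x # ys)" "set (x # ys) = set cs"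
    "cycle_of_list cs = cycle_of_list (x # ys)"
proof -
  obtain xs ys where cs: "cs = xs @ x # ys" using split_list[OF assms(2)] by blast
  have "rotate (length xs) cs = x # ys @ xs" using cs rotate_append[of xs "x # ys"] by simp
  then have "cycle_of_list cs = cycle_of_list (x # ys @ xs)"
    using cycle_of_list_rotate_independent[OF assms(1)] by metis
  moreover have "distinct (x # ys @ xs)" "set (x # ys @ xs) = set cs" using assms(1) cs by auto
  ultimately show thesis by (intro that)
qed

lemma cycle_of_list_snoc_transpose:
  "cycle_of_list (zs @ [x]) \<circ> transpose x y = cycle_of_list (zs @ [x, y])"
proof (induction zs)
  case (Cons z zs)
  then show ?case by (cases zs) (simp_all add: fun_eq_iff)
qed simp

lemma cycle_of_list_Cons_comp_transpose:
  "distinct (x # ys) \<Longrightarrow> cycle_of_list (x # ys) \<circ> transpose x y = cycle_of_list (ys @ [x, y])"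
  using cycle_of_list_rotate_independent[of "x # ys" 1] cycle_of_list_snoc_transpose[of ys x y]
  by simp

lemma coxeter_word_long_cycle:
  "distinct ws \<Longrightarrow> set ws = {1..n} \<Longrightarrow>
   \<exists>cs. distinct cs \<and> set cs = {1..Suc n} \<and> word_prod ws = cycle_of_list cs"
proof (induction n arbitrary: ws)
  case 0
  then show ?case by (intro exI[of _ "[1]"]) simp
next
  case (Suc n)
  obtain p q where ws: "ws = p @ Suc n # q"
    using split_list[of "Suc n" ws] Suc.prems(2) by auto
  have "set (p @ q) = set ws - {Suc n}" using Suc.prems(1) ws by auto
  also have "\<dots> = {1..n}" by (simp add: Suc.prems(2) atLeastAtMostSuc_conv)
  finally have pq: "distinct (p @ q)" "set (p @ q) = {1..n}" using Suc.prems(1) ws by auto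
  then obtain cs where cs: "distinct cs" "set cs = {1..Suc n}" "word_prod (p @ q) = cycle_of_list cs"
    using Suc.IH by blast
  obtain ys where ys: "distinct (Suc n # ys)" "set (Suc n # ys) = {1..Suc n}"
    "word_prod (p @ q) = cycle_of_list (Suc n # ys)"
    using cycle_of_list_rotate_to_front[OF cs(1), of "Suc n"] cs by auto
  have fresh: "Suc (Suc n) \<notin> set (Suc n # ys)" using ys(2) by simp
  have grow: "set (Suc (Suc n) # Suc n # ys) = {1..Suc (Suc n)}"
    by (simp only: list.set(2)[of "Suc (Suc n)"] ys(2)) (simp add: atLeastAtMostSuc_conv)
  let ?s = "sgen (Suc n)"
  have ws_split: "word_prod ws = word_prod p \<circ> ?s \<circ> word_prod q"
    using ws by (simp add: word_prod_append comp_assoc)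
  have comm: "?s \<circ> word_prod r = word_prod r \<circ> ?s" if "set r \<subseteq> set (p @ q)" "n \<notin> set r" for r
    using that pq(2) by (intro sgen_word_prod_comm) (force simp: le_less)
  show ?case
  proof (cases "n \<in> set q")
    case False
    then have "word_prod ws = word_prod (p @ q) \<circ> ?s"
      using comm[of q] by (simp only: ws_split word_prod_append comp_assoc) simp
    also have "\<dots> = cycle_of_list (ys @ [Suc n, Suc (Suc n)])"
      using ys(1,3) cycle_of_list_Cons_comp_transpose by (simp add: sgen_def)
    finally show ?thesis
      using ys(1) fresh grow by (intro exI[of _ "ys @ [Suc n, Suc (Suc n)]"]) auto
  next
    case True
    then have "n \<notin> set p" using Suc.prems(1) ws by auto
    then have "word_prod ws = ?s \<circ> word_prod (p @ q)"
      using comm[of p] by (simp only: ws_split word_prod_append flip: comp_assoc) simp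
    also have "\<dots> = cycle_of_list (Suc (Suc n) # Suc n # ys)"
      using ys(3) by (simp add: sgen_def transpose_commute)
    finally show ?thesis
      using ys(1) fresh grow by (intro exI[of _ "Suc (Suc n) # Suc n # ys"]) auto
  qed
qed

lemma cycle_of_list_orbit:
  assumes "distinct cs" "x \<in> set cs" "y \<in> set cs"
  shows "\<exists>d. (cycle_of_list cs ^^ d) x = y"
proof -
  obtain i j where ij: "i < length cs" "cs ! i = x" "j < length cs" "cs ! j = y"
    using assms(2,3) by (meson in_set_conv_nth)
  let ?d = "j + length cs - i"
  have "(cycle_of_list cs ^^ ?d) x = rotate ?d cs ! i"
    using ij cyclic_rotation[OF assms(1), of ?d] by (metis nth_map)
  also have "\<dots> = y" using ij by (simp add: nth_rotate)
  finally show ?thesis by blast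
qed

lemma coxeter_elem_long_cycle:
  assumes "coxeter_elem n c"
  obtains cs where "distinct cs" "set cs = {1..Suc n}" "c = cycle_of_list cs"
proof -
  obtain ws where "distinct ws" "set ws = {1..n}" "c = word_prod ws"
    using assms by (auto simp: coxeter_elem_def)
  then show thesis using coxeter_word_long_cycle that by metis
qed

lemma coxeter_elem_orbit:
  assumes "coxeter_elem n c" "x \<in> {1..Suc n}" "y \<in> {1..Suc n}"
  shows "\<exists>d. (c ^^ d) x = y"
  using assms cycle_of_list_orbit by (metis coxeter_elem_long_cycle)

lemma coxeter_elem_closed:
  assumes "coxeter_elem n c" "x \<in> {1..Suc n}"
  shows "c x \<in> {1..Suc n}"
  using assms cycle_permutes permutes_in_image by (metis coxeter_elem_long_cycle)

lemma bij_coxeter_elem: "coxeter_elem n c \<Longrightarrow> bij c"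
  using bij_word_prod by (auto simp: coxeter_elem_def)

lemma cox_len_le_length: "set ws \<subseteq> {1..n} \<Longrightarrow> cox_len n (word_prod ws) \<le> length ws"
  unfolding cox_len_def by (intro Least_le) blast

lemma cox_len_reduced_word:
  assumes "set ws \<subseteq> {1..n}"
  obtains ws' where "length ws' = cox_len n (word_prod ws)" "set ws' \<subseteq> {1..n}"
    "word_prod ws' = word_prod ws"
proof -
  let ?P = "\<lambda>m. \<exists>ws'. length ws' = m \<and> set ws' \<subseteq> {1..n} \<and> word_prod ws = word_prod ws'"
  have "?P (length ws)" using assms by blast
  then have "?P (cox_len n (word_prod ws))" unfolding cox_len_def by (rule LeastI)
  then show thesis using that by metis
qed

lemma cox_len_inv_le: "set ws \<subseteq> {1..n} \<Longrightarrow> cox_len n (inv (word_prod ws)) \<le> cox_len n (word_prod ws)"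
proof -
  assume "set ws \<subseteq> {1..n}"
  then obtain ws' where ws': "length ws' = cox_len n (word_prod ws)" "set ws' \<subseteq> {1..n}"
    "word_prod ws' = word_prod ws"
    by (rule cox_len_reduced_word)
  have "inv (word_prod ws) = word_prod (rev ws')" using ws'(3) by (metis inv_word_prod)
  then show ?thesis using cox_len_le_length[of "rev ws'" n] ws'(1,2) by simp
qed

lemma cox_len_inv: "set ws \<subseteq> {1..n} \<Longrightarrow> cox_len n (inv (word_prod ws)) = cox_len n (word_prod ws)"
  using cox_len_inv_le[of ws n] cox_len_inv_le[of "rev ws" n]
  by (simp add: inv_word_prod)

lemma coxeter_elem_inv: "coxeter_elem n c \<Longrightarrow> coxeter_elem n (inv c)"
  unfolding coxeter_elem_def by (metis distinct_rev inv_word_prod set_rev)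

lemma is_final_inv_if_is_initial:
  assumes "coxeter_elem n c" "k \<in> {1..n}" "is_initial n k c"
  shows "is_final n k (inv c)"
proof -
  obtain ws where ws: "set ws = {1..n}" and c: "c = word_prod ws"
    using assms(1) by (auto simp: coxeter_elem_def)
  have k_ws: "set (k # ws) \<subseteq> {1..n}" using assms(2) ws by simp
  have "inv c \<circ> sgen k = inv (word_prod (k # ws))"
    using c bij_word_prod[of ws] by (simp add: o_inv_distrib sgen_def)
  then have "cox_len n (inv c \<circ> sgen k) = cox_len n (sgen k \<circ> c)"
    by (metis cox_len_inv[OF k_ws] word_prod_Cons c)
  also have "\<dots> < cox_len n c" using assms(3) by (simp add: is_initial_def)
  also have "\<dots> = cox_len n (inv c)" using ws c by (simp add: cox_len_inv)
  finally show ?thesis by (simp add: is_final_def)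
qed

section \<open>Crossing numbers\<close>

definition crossings :: "(nat \<Rightarrow> nat) \<Rightarrow> nat \<Rightarrow> nat set" where
  "crossings w j = {l. l \<le> j \<and> j < w l}"

definition crossing_number :: "nat \<Rightarrow> (nat \<Rightarrow> nat) \<Rightarrow> nat" where
  "crossing_number n w = (\<Sum>j\<in>{1..n}. card (crossings w j))"

lemma finite_crossings [simp]: "finite (crossings w j)"
  unfolding crossings_def by (rule finite_subset[of _ "{..j}"]) auto

lemma crossings_sgen_other: "j \<noteq> i \<Longrightarrow> crossings (sgen i \<circ> w) j = crossings w j"
  by (auto simp: crossings_def sgen_def transpose_def)

lemma card_crossings_sgen_le:
  assumes "bij w"
  shows "card (crossings (sgen i \<circ> w) i) \<le> card (crossings w i) + 1"
proof -
  have "crossings (sgen i \<circ> w) i \<subseteq> insert (inv w i) (crossings w i)"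
    using assms by (auto simp: crossings_def sgen_def transpose_def bij_inv_eq_iff)
  then have "card (crossings (sgen i \<circ> w) i) \<le> card (insert (inv w i) (crossings w i))"
    by (intro card_mono) simp_all
  also have "\<dots> \<le> card (crossings w i) + 1" by (simp add: card_insert_le_m1)
  finally show ?thesis .
qed

lemma crossing_number_le_length:
  "set ws \<subseteq> {1..n} \<Longrightarrow> crossing_number n (word_prod ws) \<le> length ws"
proof (induction ws)
  case Nil
  then show ?case by (simp add: crossing_number_def crossings_def)
next
  case (Cons i ws)
  have "crossing_number n (word_prod (i # ws))
      \<le> (\<Sum>j\<in>{1..n}. card (crossings (word_prod ws) j) + (if j = i then 1 else 0))"
    unfolding crossing_number_def word_prod_Cons
    using card_crossings_sgen_le[OF bij_word_prod] crossings_sgen_other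
    by (intro sum_mono) (auto split: if_splits)
  also have "\<dots> = crossing_number n (word_prod ws) + 1"
    using Cons.prems by (simp add: crossing_number_def sum.distrib)
  also have "\<dots> \<le> length (i # ws)" using Cons by simp
  finally show "crossing_number n (word_prod (i # ws)) \<le> length (i # ws)" .
qed

lemma crossing_number_le_cox_len:
  assumes "set ws \<subseteq> {1..n}"
  shows "crossing_number n (word_prod ws) \<le> cox_len n (word_prod ws)"
proof -
  obtain ws' where "length ws' = cox_len n (word_prod ws)" "set ws' \<subseteq> {1..n}"
    "word_prod ws' = word_prod ws"
    using assms by (rule cox_len_reduced_word)
  then show ?thesis using crossing_number_le_length[of ws' n] by simp
qed

lemma cox_len_ge_if_crossings_nonempty:
  assumes "set ws \<subseteq> {1..n}" "\<And>j. j \<in> {1..n} \<Longrightarrow> crossings (word_prod ws) j \<noteq> {}"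
  shows "n \<le> cox_len n (word_prod ws)"
proof -
  have "n = (\<Sum>j\<in>{1..n}. 1)" by simp
  also have "\<dots> \<le> crossing_number n (word_prod ws)"
    unfolding crossing_number_def using assms(2)
    by (intro sum_mono) (simp add: Suc_le_eq card_gt_0_iff)
  also have "\<dots> \<le> cox_len n (word_prod ws)" using assms(1) by (rule crossing_number_le_cox_len)
  finally show ?thesis .
qed

lemma sgen_le_iff: "j \<noteq> i \<Longrightarrow> sgen i x \<le> j \<longleftrightarrow> x \<le> j"
  by (auto simp: sgen_def transpose_def)

lemma word_prod_le_iff: "i \<notin> set ws \<Longrightarrow> word_prod ws x \<le> i \<longleftrightarrow> x \<le> i"
  by (induction ws arbitrary: x) (simp_all add: sgen_le_iff)

lemma card_crossings_coxeter_word: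
  "distinct ws \<Longrightarrow> card (crossings (word_prod ws) j) = (if j \<in> set ws then 1 else 0)"
proof (induction ws)
  case Nil
  then show ?case by (simp add: crossings_def)
next
  case (Cons i ws)
  show "card (crossings (word_prod (i # ws)) j) = (if j \<in> set (i # ws) then 1 else 0)"
  proof (cases "j = i")
    case False
    then show ?thesis using Cons by (simp add: crossings_sgen_other)
  next
    case True
    let ?w = "word_prod ws"
    have "i \<notin> set ws" using Cons.prems by simp
    then have "l \<in> crossings (sgen i \<circ> ?w) i \<longleftrightarrow> ?w l = i" for l
      using word_prod_le_iff[of i ws l] by (auto simp: crossings_def sgen_def transpose_def)
    then have "crossings (sgen i \<circ> ?w) i = {inv ?w i}"
      using bij_inv_eq_iff[OF bij_word_prod[of ws]] by blast
    then show ?thesis using True by simp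
  qed
qed

lemma cox_len_coxeter_le: "coxeter_elem n c \<Longrightarrow> cox_len n c \<le> n"
  unfolding coxeter_elem_def using cox_len_le_length by (metis distinct_card card_atLeastAtMost diff_Suc_1 order_refl)

lemma card_crossings_coxeter_elem:
  assumes "distinct ws" "set ws = {1..n}" "j \<in> {1..n}"
  shows "card (crossings (word_prod ws) j) = 1"
  using assms card_crossings_coxeter_word by simp

lemma is_final_coxeter_elem_crossing:
  assumes ws: "distinct ws" "set ws = {1..n}" and c: "c = word_prod ws"
    and k: "k \<in> {1..n}" and fin: "is_final n k c"
  shows "k < c k \<and> c (Suc k) \<le> k"
proof (rule ccontr)
  \<comment> \<open>otherwise c \<circ> s_k still crosses every level, so its length would be at least n\<close>
  assume not_crossing: "\<not> (k < c k \<and> c (Suc k) \<le> k)"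
  have nonempty: "crossings (c \<circ> sgen k) j \<noteq> {}" if j: "j \<in> {1..n}" for j
  proof -
    have "card (crossings c j) = 1" using card_crossings_coxeter_elem[OF ws j] c by simp
    then obtain l where l: "l \<le> j" "j < c l" by (fastforce simp: crossings_def card_1_singleton_iff)
    show ?thesis
    proof (cases "j = k")
      case False
      then have "sgen k l \<in> crossings (c \<circ> sgen k) j"
        using l sgen_le_iff[OF False, of l] by (simp add: crossings_def sgen_def)
      then show ?thesis by blast
    next
      case True
      show ?thesis
      proof (cases "k < c (Suc k)")
        case True
        then have "k \<in> crossings (c \<circ> sgen k) k" by (simp add: crossings_def sgen_def)
        then show ?thesis using \<open>j = k\<close> by blast
      next
        case False
        then have "l \<noteq> k" "l \<noteq> Suc k" using not_crossing l \<open>j = k\<close> by auto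
        then have "l \<in> crossings (c \<circ> sgen k) k" using l \<open>j = k\<close> by (simp add: crossings_def sgen_def)
        then show ?thesis using \<open>j = k\<close> by blast
      qed
    qed
  qed
  have word: "set (ws @ [k]) \<subseteq> {1..n}" "c \<circ> sgen k = word_prod (ws @ [k])"
    using ws k c by (auto simp: word_prod_append)
  have "n \<le> cox_len n (c \<circ> sgen k)"
    using cox_len_ge_if_crossings_nonempty[OF word(1)] nonempty word(2) by simp
  also have "\<dots> < cox_len n c" using fin by (simp add: is_final_def)
  also have "\<dots> \<le> n" using ws c by (intro cox_len_coxeter_le) (auto simp: coxeter_elem_def)
  finally show False by simp
qed

lemma is_final_coxeter_elem_bounds:
  assumes "coxeter_elem n c" "k \<in> {1..n}" "is_final n k c"
  shows "\<forall>l<k. c l \<le> k" and "\<forall>r>Suc k. k < c r"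
proof -
  obtain ws where ws: "distinct ws" "set ws = {1..n}" and c: "c = word_prod ws"
    using assms(1) by (auto simp: coxeter_elem_def)
  have crossing: "k < c k" "c (Suc k) \<le> k"
    using is_final_coxeter_elem_crossing[OF ws c assms(2,3)] by auto
  have "card (crossings c k) = 1" using card_crossings_coxeter_elem[OF ws assms(2)] c by simp
  moreover have "k \<in> crossings c k" using crossing by (simp add: crossings_def)
  ultimately have "crossings c k = {k}" by (metis card_1_singletonE singletonD)
  then have "l \<notin> crossings c k" if "l < k" for l using that by simp
  then show below: "\<forall>l<k. c l \<le> k" by (simp add: crossings_def not_less)
  show "\<forall>r>Suc k. k < c r"
  proof (intro allI impI, rule ccontr)
    fix r assume r: "Suc k < r" "\<not> k < c r"
    let ?A = "insert r (insert (Suc k) {..<k})"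
    have "c ` ?A \<subseteq> {..k}" using r(2) crossing(2) below by auto
    moreover have "inj_on c ?A"
      using bij_is_inj[OF bij_word_prod[of ws]] c by (metis inj_on_subset subset_UNIV)
    ultimately have "card ?A \<le> card {..k}" by (intro card_inj_on_le) auto
    moreover have "card ?A = Suc (Suc k)" using r(1) by simp
    ultimately show False by simp
  qed
qed

section \<open>Paths through a hub and Greene-Kleitman invariants\<close>

definition arrow_in :: "'v set \<Rightarrow> ('v \<Rightarrow> 'v \<Rightarrow> bool) \<Rightarrow> 'v \<Rightarrow> 'v \<Rightarrow> bool" where
  "arrow_in V E u w \<longleftrightarrow> u \<in> V \<and> w \<in> V \<and> E u w"

lemma successively_iff_nth:
  "successively P xs \<longleftrightarrow> (\<forall>i. Suc i < length xs \<longrightarrow> P (xs ! i) (xs ! Suc i))"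
proof (induction xs)
  case (Cons x xs)
  then show ?case
    by (cases xs) (auto simp: successively_Cons nth_Cons' hd_conv_nth less_Suc_eq_0_disj split: nat.split)
qed simp

lemma is_dpath_iff_successively: "is_dpath V E p \<longleftrightarrow> p \<noteq> [] \<and> set p \<subseteq> V \<and> successively E p"
  by (simp add: is_dpath_def successively_iff_nth)

lemma is_dpath_snoc: "is_dpath V E p \<Longrightarrow> arrow_in V E (last p) z \<Longrightarrow> is_dpath V E (p @ [z])"
  by (auto simp: is_dpath_iff_successively successively_append_iff arrow_in_def)

lemma is_dpath_Cons: "is_dpath V E p \<Longrightarrow> arrow_in V E y (hd p) \<Longrightarrow> is_dpath V E (y # p)"
  by (auto simp: is_dpath_iff_successively successively_Cons arrow_in_def)

lemma is_dpath_extend_to: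
  assumes "(arrow_in V E)\<^sup>*\<^sup>* (last p) v" "is_dpath V E p"
  shows "\<exists>q. is_dpath V E (p @ q) \<and> last (p @ q) = v"
  using assms(1)
proof (induction rule: rtranclp_induct)
  case base
  show ?case using assms(2) by (intro exI[of _ "[]"]) simp
next
  case (step y z)
  then obtain q where q: "is_dpath V E (p @ q)" "last (p @ q) = y" by blast
  have "is_dpath V E ((p @ q) @ [z])" using q step(2) by (intro is_dpath_snoc) simp_all
  then show ?case by (intro exI[of _ "q @ [z]"]) simp
qed

lemma is_dpath_extend_from:
  assumes "(arrow_in V E)\<^sup>*\<^sup>* v (hd p)" "is_dpath V E p"
  shows "\<exists>q. is_dpath V E (q @ p) \<and> hd (q @ p) = v"
  using assms(1)
proof (induction rule: converse_rtranclp_induct)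
  case base
  show ?case using assms(2) by (intro exI[of _ "[]"]) simp
next
  case (step y z)
  then obtain q where q: "is_dpath V E (q @ p)" "hd (q @ p) = z" by blast
  have "is_dpath V E (y # q @ p)" using q step(1) by (intro is_dpath_Cons) simp_all
  then show ?case by (intro exI[of _ "y # q"]) simp
qed

definition path_hub :: "'v set \<Rightarrow> ('v \<Rightarrow> 'v \<Rightarrow> bool) \<Rightarrow> 'v \<Rightarrow> bool" where
  "path_hub V E v \<longleftrightarrow>
     (\<forall>p. is_dpath V E p \<longrightarrow> (\<exists>p'. is_dpath V E p' \<and> set p \<subseteq> set p' \<and> v \<in> set p'))"

lemma path_hub_if_reachable:
  assumes "(\<forall>u\<in>V. (arrow_in V E)\<^sup>*\<^sup>* u v) \<or> (\<forall>u\<in>V. (arrow_in V E)\<^sup>*\<^sup>* v u)"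
  shows "path_hub V E v"
  unfolding path_hub_def
proof (intro allI impI)
  fix p assume "is_dpath V E p"
  have p: "p \<noteq> []" "set p \<subseteq> V" using \<open>is_dpath V E p\<close> by (auto simp: is_dpath_def)
  show "\<exists>p'. is_dpath V E p' \<and> set p \<subseteq> set p' \<and> v \<in> set p'"
  proof (cases "\<forall>u\<in>V. (arrow_in V E)\<^sup>*\<^sup>* u v")
    case True
    then obtain q where "is_dpath V E (p @ q)" "last (p @ q) = v"
      using is_dpath_extend_to[OF _ \<open>is_dpath V E p\<close>] p by (meson last_in_set subsetD)
    then show ?thesis using p(1) by (metis Un_upper1 last_in_set set_append append_is_Nil_conv)
  next
    case False
    then obtain q where "is_dpath V E (q @ p)" "hd (q @ p) = v"
      using assms is_dpath_extend_from[OF _ \<open>is_dpath V E p\<close>] p by (meson hd_in_set subsetD)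
    then show ?thesis using p(1) by (metis Un_upper2 hd_in_set set_append append_is_Nil_conv)
  qed
qed

lemma GK_M_eq_Max_image:
  "GK_M V E g t = Max ((\<lambda>ps. sum g (\<Union>p\<in>set ps. set p)) `
     {ps. length ps = t \<and> (\<forall>p\<in>set ps. is_dpath V E p)})"
  unfolding GK_M_def by (simp only: setcompr_eq_image)

lemma GK_M_0 [simp]: "GK_M V E g 0 = 0"
  by (simp add: GK_M_eq_Max_image)

lemma GK_M_cong:
  assumes "\<And>x. x \<in> V \<Longrightarrow> g x = h x"
  shows "GK_M V E g t = GK_M V E h t"
  unfolding GK_M_eq_Max_image
proof (intro arg_cong[where f = Max] image_cong refl)
  fix ps assume "ps \<in> {ps. length ps = t \<and> (\<forall>p\<in>set ps. is_dpath V E p)}"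
  then have "(\<Union>p\<in>set ps. set p) \<subseteq> V" by (auto simp: is_dpath_def)
  then show "sum g (\<Union>p\<in>set ps. set p) = sum h (\<Union>p\<in>set ps. set p)"
    using assms by (intro sum.cong) auto
qed

lemma GK_part_cong: "(\<And>x. x \<in> V \<Longrightarrow> g x = h x) \<Longrightarrow> GK_part V E g t = GK_part V E h t"
  unfolding GK_part_def using GK_M_cong by metis

lemma GK_M_add_hub:
  assumes V: "finite V" "v \<in> V" and t: "1 \<le> t" and hub: "path_hub V E v"
  shows "GK_M V E (\<lambda>x. g x + (if x = v then a else 0)) t = GK_M V E g t + a"
proof -
  let ?g' = "\<lambda>x. g x + (if x = v then a else 0)"
  let ?F = "{ps. length ps = t \<and> (\<forall>p\<in>set ps. is_dpath V E p)}"
  let ?U = "\<lambda>ps. \<Union>p\<in>set ps. set p"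
  have U_V: "?U ps \<subseteq> V" if "ps \<in> ?F" for ps using that by (auto simp: is_dpath_def)
  have fin: "finite ((\<lambda>ps. sum h (?U ps)) ` ?F)" for h
    by (rule finite_subset[of _ "sum h ` Pow V"]) (use U_V V(1) in auto)
  have "replicate t [v] \<in> ?F" using V(2) by (simp add: is_dpath_def)
  then have ne: "(\<lambda>ps. sum h (?U ps)) ` ?F \<noteq> {}" for h by blast
  have shift: "sum ?g' (?U ps) = sum g (?U ps) + (if v \<in> ?U ps then a else 0)" if "ps \<in> ?F" for ps
    using finite_subset[OF U_V[OF that] V(1)] by (simp add: sum.distrib)
  have le: "GK_M V E ?g' t \<le> GK_M V E g t + a"
    unfolding GK_M_eq_Max_image
  proof (rule Max.boundedI[OF fin ne])
    fix y assume "y \<in> (\<lambda>ps. sum ?g' (?U ps)) ` ?F"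
    then obtain ps where ps: "ps \<in> ?F" and y: "y = sum ?g' (?U ps)" by blast
    have "sum g (?U ps) \<le> Max ((\<lambda>ps. sum g (?U ps)) ` ?F)" by (rule Max_ge[OF fin imageI[OF ps]])
    then show "y \<le> Max ((\<lambda>ps. sum g (?U ps)) ` ?F) + a" using shift[OF ps] y by simp
  qed
  \<comment> \<open>enlarge the first path of an optimal family to a path through v\<close>
  obtain ps where ps: "ps \<in> ?F" "GK_M V E g t = sum g (?U ps)"
    using Max_in[OF fin ne, of g] unfolding GK_M_eq_Max_image by auto
  obtain p rest where p: "ps = p # rest" using ps(1) t by (cases ps) auto
  have "is_dpath V E p" using ps(1) p by simp
  then obtain p' where p': "is_dpath V E p'" "set p \<subseteq> set p'" "v \<in> set p'"
    using hub by (auto simp: path_hub_def)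
  have ps': "p' # rest \<in> ?F" using ps(1) p p'(1) by auto
  have "GK_M V E g t + a \<le> sum g (?U (p' # rest)) + a"
    using ps(2) p p'(2) finite_subset[OF U_V[OF ps'] V(1)] by (auto intro!: sum_mono2)
  also have "\<dots> = sum ?g' (?U (p' # rest))" using shift[OF ps'] p'(3) by simp
  also have "\<dots> \<le> GK_M V E ?g' t" unfolding GK_M_eq_Max_image by (rule Max_ge[OF fin imageI[OF ps']])
  finally show ?thesis using le by simp
qed

lemma GK_part_add_hub:
  assumes "finite V" "v \<in> V" "1 \<le> \<delta>" "path_hub V E v"
  shows "GK_part V E (\<lambda>x. g x + (if x = v then a else 0)) \<delta>
    = GK_part V E g \<delta> + (if \<delta> = 1 then a else 0)"
  using GK_M_add_hub[OF assms(1,2) _ assms(4)] assms(3)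
  by (cases "\<delta> = 1") (simp_all add: GK_part_def)

lemma rtranclp_along_orbit:
  assumes "(f ^^ d) x = y" "P x" "\<And>z. P z \<Longrightarrow> z \<noteq> y \<Longrightarrow> P (f z) \<and> R (g z) (g (f z))"
  shows "R\<^sup>*\<^sup>* (g x) (g y)"
  using assms(1,2)
proof (induction d arbitrary: x)
  case 0
  then show ?case by simp
next
  case (Suc d)
  show ?case
  proof (cases "x = y")
    case False
    then have "P (f x)" "R (g x) (g (f x))" using Suc.prems(2) assms(3) by auto
    moreover have "(f ^^ d) (f x) = y" using Suc.prems(1) by (metis comp_apply funpow_Suc_right)
    ultimately show ?thesis using Suc.IH converse_rtranclp_into_rtranclp by metis
  qed simp
qed

lemma AR_sink_if_is_final:
  assumes c: "coxeter_elem n c" and k: "k \<in> {1..n}" and fin: "is_final n k c"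
    and u: "u \<in> AR_sub_vertices n k"
  shows "(arrow_in (AR_sub_vertices n k) (AR_arrow c))\<^sup>*\<^sup>* u (k, Suc k)"
proof -
  \<comment> \<open>follow the c-orbit of l down to k, then that of r down to k+1\<close>
  let ?R = "arrow_in (AR_sub_vertices n k) (AR_arrow c)"
  obtain l r where lr: "u = (l, r)" "1 \<le> l" "l \<le> k" "k < r" "r \<le> Suc n"
    using u by (cases u) (auto simp: AR_sub_vertices_def)
  note closed = coxeter_elem_closed[OF c]
  note below = is_final_coxeter_elem_bounds(1)[OF c k fin]
  note above = is_final_coxeter_elem_bounds(2)[OF c k fin]
  obtain d where d: "(c ^^ d) l = k" using coxeter_elem_orbit[OF c, of l k] lr k by auto
  have "?R\<^sup>*\<^sup>* (l, r) (k, r)"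
  proof (rule rtranclp_along_orbit[where g = "\<lambda>z. (z, r)" and P = "\<lambda>z. z \<in> {1..k}", OF d])
    fix z assume "z \<in> {1..k}" "z \<noteq> k"
    then have "c z \<in> {1..k}" using below closed[of z] k by auto
    then show "c z \<in> {1..k} \<and> ?R (z, r) (c z, r)"
      using \<open>z \<in> {1..k}\<close> lr by (auto simp: arrow_in_def AR_arrow_def AR_sub_vertices_def)
  qed (use lr in auto)
  moreover obtain e where e: "(c ^^ e) r = Suc k" using coxeter_elem_orbit[OF c, of r "Suc k"] lr k by auto
  have "?R\<^sup>*\<^sup>* (k, r) (k, Suc k)"
  proof (rule rtranclp_along_orbit[where g = "\<lambda>z. (k, z)" and P = "\<lambda>z. z \<in> {Suc k..Suc n}", OF e])
    fix z assume "z \<in> {Suc k..Suc n}" "z \<noteq> Suc k"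
    then have "Suc k < z" by simp
    then have "c z \<in> {Suc k..Suc n}" using above closed[of z] \<open>z \<in> {Suc k..Suc n}\<close> k by auto
    then show "c z \<in> {Suc k..Suc n} \<and> ?R (k, z) (k, c z)"
      using \<open>z \<in> {Suc k..Suc n}\<close> k by (auto simp: arrow_in_def AR_arrow_def AR_sub_vertices_def)
  qed (use lr in auto)
  ultimately show ?thesis using lr(1) by simp
qed

text \<open>Inside AR^[k] the side conditions i < c j and c i < j of the arrows hold automatically,
  so inverting c reverses every arrow.\<close>

lemma arrow_in_AR_arrow_inv:
  assumes "bij c"
  shows "arrow_in (AR_sub_vertices n k) (AR_arrow (inv c)) = (arrow_in (AR_sub_vertices n k) (AR_arrow c))\<inverse>\<inverse>"
proof (intro ext)
  fix u w :: "nat \<times> nat"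
  have inv_iff: "inv c x = y \<longleftrightarrow> x = c y" "y = inv c x \<longleftrightarrow> c y = x" for x y
    using bij_inv_eq_iff[OF assms] by metis+
  note inv_simps = inv_iff surj_f_inv_f[OF bij_is_surj[OF assms]] inv_f_f[OF bij_is_inj[OF assms]]
  show "arrow_in (AR_sub_vertices n k) (AR_arrow (inv c)) u w
      = (arrow_in (AR_sub_vertices n k) (AR_arrow c))\<inverse>\<inverse> u w"
    by (cases u; cases w) (auto simp: arrow_in_def AR_arrow_def AR_sub_vertices_def inv_simps)
qed

lemma path_hub_AR_sub_vertices:
  assumes "coxeter_elem n c" "k \<in> {1..n}" "is_initial n k c \<or> is_final n k c"
  shows "path_hub (AR_sub_vertices n k) (AR_arrow c) (k, Suc k)"
proof (rule path_hub_if_reachable)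
  let ?R = "arrow_in (AR_sub_vertices n k) (AR_arrow c)"
  show "(\<forall>u\<in>AR_sub_vertices n k. ?R\<^sup>*\<^sup>* u (k, Suc k)) \<or>
        (\<forall>u\<in>AR_sub_vertices n k. ?R\<^sup>*\<^sup>* (k, Suc k) u)"
  proof (cases "is_final n k c")
    case True
    then show ?thesis using AR_sink_if_is_final assms(1,2) by blast
  next
    case False
    then have "is_final n k (inv c)" using assms is_final_inv_if_is_initial by blast
    then have "\<forall>u\<in>AR_sub_vertices n k. ?R\<inverse>\<inverse>\<^sup>*\<^sup>* u (k, Suc k)"
      using AR_sink_if_is_final[OF coxeter_elem_inv[OF assms(1)] assms(2)]
      unfolding arrow_in_AR_arrow_inv[OF bij_coxeter_elem[OF assms(1)]] by blast
    then show ?thesis by (simp add: rtranclp_conversep)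
  qed
qed

section \<open>Ferrers diagrams and the box [k, k+1]\<close>

context
  fixes lam :: "nat list"
  assumes partition: "is_partition lam"
begin

lemma part_antimono: "1 \<le> i \<Longrightarrow> i \<le> i' \<Longrightarrow> i' \<le> length lam \<Longrightarrow> part lam i' \<le> part lam i"
  using partition sorted_wrt_nth_less[of "(\<ge>)" lam "i - 1" "i' - 1"]
  by (cases "i = i'") (auto simp: is_partition_def Defs.part_def)

lemma part_le_part_1: "1 \<le> i \<Longrightarrow> i \<le> length lam \<Longrightarrow> part lam i \<le> part lam 1"
  using part_antimono[of 1 i] by simp

lemma mem_Fer_bounds:
  "(i, j) \<in> Fer lam \<Longrightarrow> i \<in> {1..length lam} \<and> j \<in> {1..part lam 1} \<and> j \<le> part lam i"
  using part_le_part_1 by (fastforce simp: Fer_def)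

lemma row_label_inj: "inj_on (row_label lam) {1..length lam}"
proof (rule linorder_inj_onI')
  fix i i' assume "i < i'" "i \<in> {1..length lam}" "i' \<in> {1..length lam}"
  then show "row_label lam i \<noteq> row_label lam i'"
    using part_antimono[of i i'] part_le_part_1[of i] part_le_part_1[of i']
    by (auto simp: row_label_def)
qed

lemma col_len_antimono: "j \<le> j' \<Longrightarrow> col_len lam j' \<le> col_len lam j"
  unfolding col_len_def by (intro card_mono) (auto intro: finite_subset[of _ "{1..length lam}"])

lemma col_label_inj: "inj_on (col_label lam) {1..part lam 1}"
proof (rule linorder_inj_onI')
  fix j j' assume "j < j'" "j \<in> {1..part lam 1}" "j' \<in> {1..part lam 1}"
  then show "col_label lam j \<noteq> col_label lam j'"
    using col_len_antimono[of j j'] by (auto simp: col_label_def)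
qed

lemma row_of_row_label: "i \<in> {1..length lam} \<Longrightarrow> row_of lam (row_label lam i) = i"
  unfolding row_of_def using row_label_inj by (intro the_equality) (auto dest: inj_onD)

lemma col_of_col_label: "j \<in> {1..part lam 1} \<Longrightarrow> col_of lam (col_label lam j) = j"
  unfolding col_of_def using col_label_inj by (intro the_equality) (auto dest: inj_onD)

lemma col_len_ge: "(i0, j) \<in> Fer lam \<Longrightarrow> i0 \<le> col_len lam j"
proof -
  assume box: "(i0, j) \<in> Fer lam"
  have "{1..i0} \<subseteq> {i. 1 \<le> i \<and> i \<le> length lam \<and> j \<le> part lam i}"
    using box part_antimono by (fastforce simp: Fer_def)
  then have "card {1..i0} \<le> col_len lam j"
    unfolding col_len_def by (intro card_mono) (auto intro: finite_subset[of _ "{1..length lam}"])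
  then show ?thesis by simp
qed

text \<open>The east edge of row i_0 and the south edge of column j_0 carry consecutive labels
  only at an outer corner.\<close>

lemma labelled_box_is_corner:
  assumes box: "(i0, j0) \<in> Fer lam" "row_label lam i0 = k" "col_label lam j0 = Suc k"
  shows "part lam i0 = j0" and "part lam 1 + i0 - j0 = k"
proof -
  have "i0 \<le> col_len lam j0" using col_len_ge[OF box(1)] .
  moreover have "j0 \<le> part lam i0" "part lam i0 \<le> part lam 1" "1 \<le> j0"
    using mem_Fer_bounds[OF box(1)] part_le_part_1 by auto
  ultimately show "part lam i0 = j0" "part lam 1 + i0 - j0 = k"
    using box(2,3) unfolding row_label_def col_label_def by linarith+
qed

lemma diagonal_below_corner:
  assumes corner: "(i0, j0) \<in> Fer lam" "part lam i0 = j0"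
    and box: "(i, j) \<in> Fer lam" "part lam 1 + i - j = part lam 1 + i0 - j0" "(i, j) \<noteq> (i0, j0)"
  shows "i < i0 \<and> j < j0"
proof -
  have b0: "i0 \<in> {1..length lam}" "j0 \<le> part lam 1" and b: "i \<in> {1..length lam}" "j \<le> part lam i"
    using mem_Fer_bounds[OF corner(1)] mem_Fer_bounds[OF box(1)] by auto
  have "i + j0 = i0 + j" using box(2) b0 b part_le_part_1[of i] by auto
  moreover have "\<not> i0 < i"
  proof
    assume "i0 < i"
    then have "part lam i \<le> j0" using part_antimono[of i0 i] corner(2) b0 b by simp
    then show False using \<open>i + j0 = i0 + j\<close> \<open>i0 < i\<close> b by linarith
  qed
  ultimately show ?thesis using box(3) by auto
qed

lemma delta_max_corner:
  assumes "(i0, j0) \<in> Fer lam" "part lam i0 = j0"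
  shows "delta_max lam (part lam 1 + i0 - j0) = min i0 j0"
  unfolding delta_max_def
proof (rule Max_eqI)
  have "diag lam (part lam 1 + i0 - j0) \<subseteq> {1..length lam} \<times> {1..part lam 1}"
    using mem_Fer_bounds by (fastforce simp: diag_def)
  then show "finite ((\<lambda>(i, j). min i j) ` diag lam (part lam 1 + i0 - j0))"
    by (meson finite_SigmaI finite_atLeastAtMost finite_imageI finite_subset)
  show "min i0 j0 \<in> (\<lambda>(i, j). min i j) ` diag lam (part lam 1 + i0 - j0)"
    using assms(1) by (force simp: diag_def)
next
  fix y assume "y \<in> (\<lambda>(i, j). min i j) ` diag lam (part lam 1 + i0 - j0)"
  then obtain i j where "(i, j) \<in> Fer lam" "part lam 1 + i - j = part lam 1 + i0 - j0" "y = min i j"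
    by (auto simp: diag_def)
  then show "y \<le> min i0 j0"
    using diagonal_below_corner[OF assms] by (cases "(i, j) = (i0, j0)") fastforce+
qed

lemma corner_delta_eq_1_iff:
  assumes corner: "(i0, j0) \<in> Fer lam" "part lam i0 = j0"
    and box: "(i, j) \<in> Fer lam" "part lam 1 + i - j = part lam 1 + i0 - j0"
  shows "delta_max lam (part lam 1 + i - j) - min i j + 1 = 1 \<longleftrightarrow> (i, j) = (i0, j0)"
  using delta_max_corner[OF corner] diagonal_below_corner[OF corner box] box(2) by fastforce

lemma add_box_labelled_box:
  assumes box: "(i0, j0) \<in> Fer lam" "row_label lam i0 = k" "col_label lam j0 = Suc k"
  shows "add_box lam k a g = (\<lambda>b. g b + (if b = (i0, j0) then a else 0))"
proof
  fix b :: "nat \<times> nat"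
  obtain i j where b: "b = (i, j)" by (cases b)
  have "(i, j) \<in> Fer lam \<and> row_label lam i = k \<and> col_label lam j = Suc k \<longleftrightarrow> (i, j) = (i0, j0)"
    using box mem_Fer_bounds[OF box(1)] mem_Fer_bounds[of i j]
      inj_on_eq_iff[OF row_label_inj, of i i0] inj_on_eq_iff[OF col_label_inj, of j j0]
    by auto
  then show "add_box lam k a g b = g b + (if b = (i0, j0) then a else 0)"
    by (auto simp: add_box_def b)
qed

lemma rep_add_box:
  assumes box: "(i0, j0) \<in> Fer lam" "row_label lam i0 = k" "col_label lam j0 = Suc k"
  shows "rep lam (add_box lam k a f) = (\<lambda>x. rep lam f x + (if x = (k, Suc k) then a else 0))"
proof
  fix x :: "nat \<times> nat"
  obtain l r where x: "x = (l, r)" by (cases x)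
  have bounds0: "i0 \<in> {1..length lam}" "j0 \<in> {1..part lam 1}" using mem_Fer_bounds[OF box(1)] by auto
  then have "k \<in> Lset lam" "Suc k \<in> Rset lam"
    unfolding Lset_def Rset_def using box(2,3) by (auto intro: rev_image_eqI)
  show "rep lam (add_box lam k a f) x = rep lam f x + (if x = (k, Suc k) then a else 0)"
  proof (cases "l \<in> Lset lam \<and> r \<in> Rset lam \<and> l < r")
    case True
    then obtain i j where ij: "i \<in> {1..length lam}" "l = row_label lam i"
      "j \<in> {1..part lam 1}" "r = col_label lam j"
      by (auto simp: Lset_def Rset_def)
    have "(row_of lam l, col_of lam r) = (i0, j0) \<longleftrightarrow> x = (k, Suc k)"
      using ij x box(2,3) bounds0 row_of_row_label col_of_col_label
        inj_on_eq_iff[OF row_label_inj, of i i0] inj_on_eq_iff[OF col_label_inj, of j j0]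
      by auto
    then show ?thesis
      using True x by (simp add: rep_def add_box_labelled_box[OF box])
  next
    case False
    then show ?thesis using x \<open>k \<in> Lset lam\<close> \<open>Suc k \<in> Rset lam\<close> by (auto simp: rep_def)
  qed
qed

end

lemma finite_AR_sub_vertices: "finite (AR_sub_vertices n k)"
  by (rule finite_subset[of _ "{..Suc n} \<times> {..Suc n}"]) (auto simp: AR_sub_vertices_def)

lemma RSK_apply:
  assumes "(i, j) \<in> Fer lam"
  shows "RSK n lam c g (i, j) = GK_part (AR_sub_vertices n (part lam 1 + i - j)) (AR_arrow c)
           (rep lam g) (delta_max lam (part lam 1 + i - j) - min i j + 1)"
  using assms by (simp add: RSK_def Let_def)

lemma RSK_add_box_at_labelled_box:
  assumes lam: "is_partition lam" and c: "coxeter_elem n c" "k \<in> {1..n}" "is_initial n k c \<or> is_final n k c"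
    and box: "(i0, j0) \<in> Fer lam" "row_label lam i0 = k" "col_label lam j0 = Suc k"
    and ij: "(i, j) \<in> Fer lam"
  shows "RSK n lam c (add_box lam k a f) (i, j) = RSK n lam c f (i, j) + (if (i, j) = (i0, j0) then a else 0)"
proof -
  note corner = labelled_box_is_corner[OF lam box]
  let ?d = "part lam 1 + i - j" and ?\<delta> = "delta_max lam (part lam 1 + i - j) - min i j + 1"
  have "RSK n lam c (add_box lam k a f) (i, j)
      = GK_part (AR_sub_vertices n ?d) (AR_arrow c) (rep lam f) ?\<delta> + (if ?d = k \<and> ?\<delta> = 1 then a else 0)"
  proof (cases "?d = k")
    case True
    have "(k, Suc k) \<in> AR_sub_vertices n k" using c(2) by (auto simp: AR_sub_vertices_def)
    from GK_part_add_hub[OF finite_AR_sub_vertices this _ path_hub_AR_sub_vertices[OF c]]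
    show ?thesis unfolding RSK_apply[OF ij] rep_add_box[OF lam box] using True by simp
  next
    case False
    then show ?thesis unfolding RSK_apply[OF ij] rep_add_box[OF lam box]
      by (auto simp: AR_sub_vertices_def intro: GK_part_cong)
  qed
  also have "(?d = k \<and> ?\<delta> = 1) \<longleftrightarrow> (i, j) = (i0, j0)"
    using corner_delta_eq_1_iff[OF lam box(1) corner(1) ij] corner(2) by auto
  finally show ?thesis by (simp add: RSK_apply[OF ij])
qed

theorem theorem6p15:
  fixes n :: nat and lam :: "nat list" and c :: "nat \<Rightarrow> nat" and k a :: nat
    and f :: "nat \<times> nat \<Rightarrow> nat"
  assumes "1 \<le> n"
    and "is_partition lam"
    and "part lam 1 + length lam - 1 = n"
    and "coxeter_elem n c"
    and "k \<in> {1..n}"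
    and "is_final n k (c_lam n lam)"
    and "is_initial n k c \<or> is_final n k c"
  shows "\<forall>b\<in>Fer lam. RSK n lam c (add_box lam k a f) b = add_box lam k a (RSK n lam c f) b"
proof (cases "\<exists>i0 j0. (i0, j0) \<in> Fer lam \<and> row_label lam i0 = k \<and> col_label lam j0 = Suc k")
  case False
  then have "add_box lam k a g = g" for g by (auto simp: add_box_def fun_eq_iff)
  then show ?thesis by simp
next
  case True
  then obtain i0 j0 where box: "(i0, j0) \<in> Fer lam" "row_label lam i0 = k" "col_label lam j0 = Suc k"
    by blast
  show ?thesis
  proof (intro ballI, clarify)
    fix i j assume "(i, j) \<in> Fer lam"
    from RSK_add_box_at_labelled_box[OF assms(2,4,5,7) box this]
    show "RSK n lam c (add_box lam k a f) (i, j) = add_box lam k a (RSK n lam c f) (i, j)"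
      by (simp only: add_box_labelled_box[OF assms(2) box])
  qed
qed

end
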